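(* Let two processes $\sigma$ and $\zeta$ be constructed from initial states $\sigma(\cdot,0),\zeta(\cdot,0)\in\Sigma$ with the same realization of the space-time Poisson point process. (a) For a positive integer $m$ let $D_m(t)=\{x:\zeta(x,t)\ge\sigma(x,t)+m\}$. If $x\in D_m(t)$, then $\zeta(x,t)$ has no maximizer $y\in D_m(0)^c$; and if $x\in D_m(t)^c$, then $\sigma(x,t)$ has no maximizer $y\in D_m(0)$. (b) Suppose $\sigma(y,0)\le\zeta(y,0)\le\sigma(y,0)+h$ for all $y\in\mathbb R^d$, for a fixed positive integer $h$. Then $\sigma(x,t)\le\zeta(x,t)\le\sigma(x,t)+h$ for all $x$ and $t\ge0$, and with $A(t)=\{x:\zeta(x,t)=\sigma(x,t)+h\}$ we have $A(t)=\{x:\sigma(x,t)\text{ has a maximizer }y\in A(0)\}$. (c) If $h=1$ in (b), then additionally $A(t)^c=\{x:\zeta(x,t)\text{ has a maximizer }y\in A(0)^c\}$.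
   Context: Order: for $x,y\in\mathbb R^d$, $x\le y$ iff $x_i\le y_i$ for all $i$; $|x|_\infty=\max_i|x_i|$; $d\ge2$. $\mathbb Z^*=\mathbb Z\cup\{\pm\infty\}$. The state space $\Sigma$ is the set of functions $\sigma:\mathbb R^d\to\mathbb Z^*$ such that (i) $x\le y$ implies $\sigma(x)\le\sigma(y)$; (ii) for every cube $[-q\mathbf 1,q\mathbf 1]$ there are finite partitions $-q=s_i^0<\dots<s_i^{m_i}=q$ of each coordinate axis such that $\sigma$ is constant on each rectangle $\prod_i[s_i^{k_i},s_i^{k_i+1})$; (iii) for every $b\in\mathbb R^d$, $\lim_{M\to\infty}\sup\{|y|_\infty^{-d/(d+1)}\sigma(y):y\le b,|y|_\infty\ge M\}=-\infty$. A rate-one Poisson point process on $\mathbb R^d\times(0,\infty)$ is given; $\mathbf H((y,0),(x,t))$ is the maximal number of Poisson points on a strictly increasing chain (coordinatewise order in $\mathbb R^{d+1}$) in $\{(\eta,s):y<\eta\le x,0<s\le t\}$ ($=0$ if $t=0$). Processes are defined by $\sigma(x,t)=\sup_{y\le x}\{\sigma(y,0)+\mathbf H((y,0),(x,t))\}$ and similarly for $\zeta$ (the supremum is attained almost surely). We say $\sigma(x,t)$ has a maximizer $y$ if $y\le x$ and $\sigma(x,t)=\sigma(y,0)+\mathbf H((y,0),(x,t))$. *)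

theory Defs
  imports "HOL-Analysis.Analysis" "HOL-Probability.Probability"
begin


definition cle :: "real ^ 'd \<Rightarrow> real ^ 'd \<Rightarrow> bool" where
  "cle x y \<longleftrightarrow> (\<forall>i. x $ i \<le> y $ i)"

definition clt :: "real ^ 'd \<Rightarrow> real ^ 'd \<Rightarrow> bool" where
  "clt x y \<longleftrightarrow> (\<forall>i. x $ i < y $ i)"

definition linf :: "real ^ 'd::finite \<Rightarrow> real" where
  "linf x = Max (range (\<lambda>i. \<bar>x $ i\<bar>))"

definition zstar :: "ereal set" where
  "zstar = range (\<lambda>k::int. ereal (of_int k)) \<union> {\<infinity>, -\<infinity>}"

definition StateSpace :: "(real ^ 'd::finite \<Rightarrow> ereal) set" where
  "StateSpace = {\<sigma>.
     (\<forall>x. \<sigma> x \<in> zstar) \<and>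
     (\<forall>x y. cle x y \<longrightarrow> \<sigma> x \<le> \<sigma> y) \<and>
     (\<forall>q::real. q > 0 \<longrightarrow>
        (\<exists>(s :: 'd \<Rightarrow> nat \<Rightarrow> real) (m :: 'd \<Rightarrow> nat).
           (\<forall>i. s i 0 = -q \<and> s i (m i) = q \<and> (\<forall>k<m i. s i k < s i (Suc k))) \<and>
           (\<forall>k :: 'd \<Rightarrow> nat. (\<forall>i. k i < m i) \<longrightarrow>
              (\<forall>x y. (\<forall>i. s i (k i) \<le> x $ i \<and> x $ i < s i (Suc (k i))) \<and>
                     (\<forall>i. s i (k i) \<le> y $ i \<and> y $ i < s i (Suc (k i)))
                     \<longrightarrow> \<sigma> x = \<sigma> y)))) \<and>
     (\<forall>b. ((\<lambda>M::real. Sup {ereal (linf y powr (- real CARD('d) / (real CARD('d) + 1))) * \<sigma> y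
                              | y. cle y b \<and> linf y \<ge> M}) \<longlongrightarrow> -\<infinity>) at_top)}"

definition sptlt :: "(real ^ 'd) \<times> real \<Rightarrow> (real ^ 'd) \<times> real \<Rightarrow> bool" where
  "sptlt p q \<longleftrightarrow> clt (fst p) (fst q) \<and> snd p < snd q"

definition Hpp :: "((real ^ 'd) \<times> real) set \<Rightarrow> real ^ 'd \<Rightarrow> real ^ 'd \<Rightarrow> real \<Rightarrow> ereal" where
  "Hpp P y x t = Sup {ereal (real (length ps)) | ps.
      sorted_wrt sptlt ps \<and>
      (\<forall>p\<in>set ps. p \<in> P \<and> clt y (fst p) \<and> cle (fst p) x \<and> 0 < snd p \<and> snd p \<le> t)}"

definition proc :: "(real ^ 'd \<Rightarrow> ereal) \<Rightarrow> ((real ^ 'd) \<times> real) set \<Rightarrow> real ^ 'd \<Rightarrow> real \<Rightarrow> ereal" where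
  "proc \<sigma>0 P x t = (SUP y\<in>{y. cle y x}. \<sigma>0 y + Hpp P y x t)"

definition is_maximizer :: "(real ^ 'd \<Rightarrow> ereal) \<Rightarrow> ((real ^ 'd) \<times> real) set \<Rightarrow> real ^ 'd \<Rightarrow> real \<Rightarrow> real ^ 'd \<Rightarrow> bool" where
  "is_maximizer \<sigma>0 P x t y \<longleftrightarrow> cle y x \<and> proc \<sigma>0 P x t = \<sigma>0 y + Hpp P y x t"

text \<open>Rate-one Poisson point process on R^d x (0,infinity), as a random point set N on the
  probability space M.\<close>
definition bounded_borel_st :: "((real ^ 'd::finite) \<times> real) set \<Rightarrow> bool" where
  "bounded_borel_st B \<longleftrightarrow> B \<in> sets lborel \<and> bounded B \<and> B \<subseteq> UNIV \<times> {0<..}"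

definition poisson_pp :: "'w measure \<Rightarrow> ('w \<Rightarrow> ((real ^ 'd::finite) \<times> real) set) \<Rightarrow> bool" where
  "poisson_pp M N \<longleftrightarrow> prob_space M \<and>
     (\<forall>\<omega>\<in>space M. N \<omega> \<subseteq> UNIV \<times> {0<..}) \<and>
     (\<forall>B. bounded_borel_st B \<longrightarrow>
        {\<omega>\<in>space M. finite (N \<omega> \<inter> B)} \<in> sets M \<and>
        (\<lambda>\<omega>. card (N \<omega> \<inter> B)) \<in> measurable M (count_space UNIV) \<and>
        (\<forall>n. measure M {\<omega>\<in>space M. finite (N \<omega> \<inter> B) \<and> card (N \<omega> \<inter> B) = n}
              = pmf (poisson_pmf (measure lborel B)) n)) \<and>
     (\<forall>(J::nat set) B. finite J \<longrightarrow> (\<forall>j\<in>J. bounded_borel_st (B j)) \<longrightarrow>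
        disjoint_family_on B J \<longrightarrow>
        prob_space.indep_vars M (\<lambda>_. count_space UNIV) (\<lambda>j \<omega>. card (N \<omega> \<inter> B j)) J)"

end

theory Submission
  imports Defs
begin

text \<open>Both processes are suprema of the initial profile plus the same last-passage values
  \<open>H(y,x,t)\<close>. If \<open>y\<close> is a maximizer of \<open>\<zeta>(x,t)\<close> and \<open>\<sigma>(x,t) + m \<le> \<zeta>(x,t)\<close>, then
  \<open>\<sigma>(y,0) + H + m \<le> \<sigma>(x,t) + m \<le> \<zeta>(y,0) + H\<close>, and cancelling \<open>H\<close> gives
  \<open>\<sigma>(y,0) + m \<le> \<zeta>(y,0)\<close>; the cancellation needs \<open>H < \<infinity>\<close>, which holds because a Poisson
  configuration is almost surely locally finite. Conversely, a maximizer of \<open>\<sigma>(x,t)\<close> with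
  gap \<open>\<ge> m\<close> at time 0 carries the gap to \<open>(x,t)\<close>. For (b) the supremum is moreover monotone
  and commutes with adding constants; for (c) all values lie in \<open>\<int> \<union> {\<plusminus>\<infinity>}\<close>, so a gap in
  \<open>[0,1]\<close> other than 1 is 0.\<close>

definition locally_finite :: "'a::metric_space set \<Rightarrow> bool" where
  "locally_finite P \<longleftrightarrow> (\<forall>K. bounded K \<longrightarrow> finite (P \<inter> K))"

lemma pmf_sums_one: "(\<lambda>n. pmf (p :: nat pmf) n) sums 1"
proof -
  have "(\<lambda>n. measure (measure_pmf p) {n}) sums measure (measure_pmf p) (\<Union>n. {n})"
    by (rule measure_pmf.finite_measure_UNION) (auto simp: disjoint_family_on_def)
  then show ?thesis by (simp add: measure_pmf_single)
qed

lemma poisson_pp_AE_finite: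
  assumes pp: "poisson_pp M N" and B: "bounded_borel_st B"
  shows "AE \<omega> in M. finite (N \<omega> \<inter> B)"
proof -
  interpret prob_space M using pp by (simp add: poisson_pp_def)
  define A where "A n = {\<omega>\<in>space M. finite (N \<omega> \<inter> B) \<and> card (N \<omega> \<inter> B) = n}" for n
  have fin: "{\<omega>\<in>space M. finite (N \<omega> \<inter> B)} \<in> events"
    and card: "(\<lambda>\<omega>. card (N \<omega> \<inter> B)) \<in> measurable M (count_space UNIV)"
    and prob_A: "\<And>n. prob (A n) = pmf (poisson_pmf (measure lborel B)) n"
    using pp B by (auto simp: poisson_pp_def A_def)
  have "A n = {\<omega>\<in>space M. finite (N \<omega> \<inter> B)} \<inter> ((\<lambda>\<omega>. card (N \<omega> \<inter> B)) -` {n} \<inter> space M)" for n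
    by (auto simp: A_def)
  then have "range A \<subseteq> events"
    using fin measurable_sets[OF card] by auto
  then have "(\<lambda>n. prob (A n)) sums prob (\<Union>n. A n)"
    by (rule finite_measure_UNION) (auto simp: disjoint_family_on_def A_def)
  then have "pmf (poisson_pmf (measure lborel B)) sums prob (\<Union>n. A n)"
    by (simp add: prob_A)
  then have "prob (\<Union>n. A n) = 1"
    using pmf_sums_one sums_unique2 by blast
  moreover have "(\<Union>n. A n) = {\<omega>\<in>space M. finite (N \<omega> \<inter> B)}"
    by (auto simp: A_def)
  ultimately have "AE \<omega> in M. \<omega> \<in> {\<omega>\<in>space M. finite (N \<omega> \<inter> B)}"
    by (intro AE_prob_1) simp
  then show ?thesis by eventually_elim auto
qed

lemma poisson_pp_AE_locally_finite:
  assumes pp: "poisson_pp M (N :: 'w \<Rightarrow> ((real ^ 'd::finite) \<times> real) set)"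
  shows "AE \<omega> in M. locally_finite (N \<omega>)"
proof -
  define B :: "nat \<Rightarrow> ((real ^ 'd) \<times> real) set"
    where "B k = cball 0 (real k) \<inter> (UNIV \<times> {0<..})" for k
  have "bounded_borel_st (B k)" for k
  proof -
    have "B k \<in> sets borel"
      unfolding B_def by (intro sets.Int borel_closed borel_open open_Times) auto
    then show ?thesis
      by (auto simp: bounded_borel_st_def B_def bounded_Int)
  qed
  then have "AE \<omega> in M. \<forall>k. finite (N \<omega> \<inter> B k)"
    using poisson_pp_AE_finite[OF pp] by (simp add: AE_all_countable)
  moreover have "AE \<omega> in M. N \<omega> \<subseteq> UNIV \<times> {0<..}"
    using pp by (intro AE_I2) (simp add: poisson_pp_def)
  ultimately show ?thesis
  proof eventually_elim
    case (elim \<omega>)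
    show ?case unfolding locally_finite_def
    proof (intro allI impI)
      fix K :: "((real ^ 'd) \<times> real) set"
      assume "bounded K"
      then obtain r where r: "\<forall>p\<in>K. norm p \<le> r"
        by (auto simp: bounded_pos)
      obtain k :: nat where k: "r \<le> real k"
        using real_arch_simple by blast
      have "N \<omega> \<inter> K \<subseteq> N \<omega> \<inter> B k"
      proof
        fix p assume p: "p \<in> N \<omega> \<inter> K"
        then have "norm p \<le> real k"
          using r k by (meson IntD2 order_trans)
        then show "p \<in> N \<omega> \<inter> B k"
          using p elim(2) by (auto simp: B_def)
      qed
      then show "finite (N \<omega> \<inter> K)"
        using elim(1) finite_subset by blast
    qed
  qed
qed

lemma sorted_wrt_sptlt_distinct: "sorted_wrt sptlt ps \<Longrightarrow> distinct ps"
  by (induction ps) (auto simp: sptlt_def)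

lemma Hpp_nat:
  assumes "locally_finite P"
  obtains n :: nat where "Hpp P y x t = ereal (real n)"
proof -
  define C where "C = P \<inter> (cbox y x \<times> {0..t})"
  have "finite C"
    using assms unfolding locally_finite_def C_def by (simp add: bounded_Times)
  define S where "S = {ereal (real (length ps)) | ps.
      sorted_wrt sptlt ps \<and>
      (\<forall>p\<in>set ps. p \<in> P \<and> clt y (fst p) \<and> cle (fst p) x \<and> 0 < snd p \<and> snd p \<le> t)}"
  have "S \<subseteq> (\<lambda>n. ereal (real n)) ` {..card C}"
  proof
    fix s assume "s \<in> S"
    then obtain ps where s: "s = ereal (real (length ps))" and "sorted_wrt sptlt ps"
      and ps: "\<forall>p\<in>set ps. p \<in> P \<and> clt y (fst p) \<and> cle (fst p) x \<and> 0 < snd p \<and> snd p \<le> t"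
      unfolding S_def by blast
    then have "length ps = card (set ps)"
      by (simp add: distinct_card sorted_wrt_sptlt_distinct)
    also have "\<dots> \<le> card C"
    proof (rule card_mono[OF \<open>finite C\<close>], rule subsetI)
      fix p assume "p \<in> set ps"
      with ps show "p \<in> C"
        by (cases p) (force simp: C_def clt_def cle_def mem_box_cart less_imp_le)
    qed
    finally show "s \<in> (\<lambda>n. ereal (real n)) ` {..card C}"
      using s by auto
  qed
  then have "finite S"
    by (rule finite_subset) simp
  moreover have "ereal 0 \<in> S"
    unfolding S_def by force
  ultimately have "Sup S \<in> S"
    by (metis Max_in cSup_eq_Max empty_iff)
  then show ?thesis
    using that unfolding Hpp_def S_def by blast
qed

lemma proc_upper: "cle y x \<Longrightarrow> \<sigma>0 y + Hpp P y x t \<le> proc \<sigma>0 P x t"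
  unfolding proc_def by (rule SUP_upper) simp

lemma proc_mono: "(\<And>y. \<sigma>0 y \<le> \<zeta>0 y) \<Longrightarrow> proc \<sigma>0 P x t \<le> proc \<zeta>0 P x t"
  unfolding proc_def by (intro SUP_mono) (auto intro: add_right_mono)

lemma proc_add_const: "proc (\<lambda>y. \<sigma>0 y + ereal c) P x t = proc \<sigma>0 P x t + ereal c"
proof -
  have "cle x x"
    by (simp add: cle_def)
  then have "(SUP y\<in>{y. cle y x}. \<sigma>0 y + Hpp P y x t + ereal c) =
             (SUP y\<in>{y. cle y x}. \<sigma>0 y + Hpp P y x t) + ereal c"
    by (intro SUP_ereal_add_left) auto
  then show ?thesis
    unfolding proc_def by (simp add: ac_simps)
qed

lemma proc_le_add_const:
  "(\<And>y. \<zeta>0 y \<le> \<sigma>0 y + ereal c) \<Longrightarrow> proc \<zeta>0 P x t \<le> proc \<sigma>0 P x t + ereal c"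
  by (metis proc_mono proc_add_const)

lemma proc_gap_imp_maximizer_gap:
  assumes "locally_finite P" and y: "is_maximizer \<zeta>0 P x t y"
    and gap: "proc \<sigma>0 P x t + c \<le> proc \<zeta>0 P x t"
  shows "\<sigma>0 y + c \<le> \<zeta>0 y"
proof -
  obtain n :: nat where n: "Hpp P y x t = ereal (real n)"
    using Hpp_nat[OF assms(1)] .
  have "\<sigma>0 y + c + Hpp P y x t = (\<sigma>0 y + Hpp P y x t) + c"
    by (simp add: ac_simps)
  also have "\<dots> \<le> proc \<sigma>0 P x t + c"
    using y by (intro add_right_mono proc_upper) (simp add: is_maximizer_def)
  also have "\<dots> \<le> \<zeta>0 y + Hpp P y x t"
    using gap y by (simp add: is_maximizer_def)
  finally show ?thesis
    by (simp add: n ereal_add_le_add_iff2)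
qed

lemma maximizer_gap_imp_proc_gap:
  assumes y: "is_maximizer \<sigma>0 P x t y" and gap: "\<sigma>0 y + c \<le> \<zeta>0 y"
  shows "proc \<sigma>0 P x t + c \<le> proc \<zeta>0 P x t"
proof -
  have "proc \<sigma>0 P x t + c = (\<sigma>0 y + c) + Hpp P y x t"
    using y by (simp add: is_maximizer_def ac_simps)
  also have "\<dots> \<le> \<zeta>0 y + Hpp P y x t"
    using gap by (rule add_right_mono)
  also have "\<dots> \<le> proc \<zeta>0 P x t"
    using y by (intro proc_upper) (simp add: is_maximizer_def)
  finally show ?thesis .
qed

lemma maximal_gap_set_eq:
  assumes lf: "locally_finite P" and le: "\<And>y. \<zeta>0 y \<le> \<sigma>0 y + ereal c"
    and max: "\<And>x. \<exists>y. is_maximizer \<zeta>0 P x t y"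
  shows "{x. proc \<zeta>0 P x t = proc \<sigma>0 P x t + ereal c} =
         {x. \<exists>y. is_maximizer \<sigma>0 P x t y \<and> \<zeta>0 y = \<sigma>0 y + ereal c}"
proof -
  have "proc \<zeta>0 P x t = proc \<sigma>0 P x t + ereal c \<longleftrightarrow>
        (\<exists>y. is_maximizer \<sigma>0 P x t y \<and> \<zeta>0 y = \<sigma>0 y + ereal c)" for x
  proof
    assume eq: "proc \<zeta>0 P x t = proc \<sigma>0 P x t + ereal c"
    obtain y where y: "is_maximizer \<zeta>0 P x t y"
      using max by blast
    have zy: "\<zeta>0 y = \<sigma>0 y + ereal c"
      using le proc_gap_imp_maximizer_gap[OF lf y] eq by (metis order_refl antisym)
    have "proc \<sigma>0 P x t + ereal c = (\<sigma>0 y + Hpp P y x t) + ereal c"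
      using eq y zy by (simp add: is_maximizer_def ac_simps)
    then have "proc \<sigma>0 P x t = \<sigma>0 y + Hpp P y x t"
      by (simp add: ereal_add_cancel_right)
    then show "\<exists>y. is_maximizer \<sigma>0 P x t y \<and> \<zeta>0 y = \<sigma>0 y + ereal c"
      using y zy by (auto simp: is_maximizer_def)
  next
    assume "\<exists>y. is_maximizer \<sigma>0 P x t y \<and> \<zeta>0 y = \<sigma>0 y + ereal c"
    then have "proc \<sigma>0 P x t + ereal c \<le> proc \<zeta>0 P x t"
      by (metis maximizer_gap_imp_proc_gap order_refl)
    then show "proc \<zeta>0 P x t = proc \<sigma>0 P x t + ereal c"
      using proc_le_add_const le by (metis antisym)
  qed
  then show ?thesis
    by blast
qed

lemma zstar_cases:
  assumes "a \<in> zstar"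
  obtains (int) k :: int where "a = ereal (of_int k)" | (PInf) "a = \<infinity>" | (MInf) "a = -\<infinity>"
  using assms unfolding zstar_def by blast

lemma zstar_add_nat:
  assumes "a \<in> zstar"
  shows "a + ereal (real n) \<in> zstar"
  using assms
proof (cases rule: zstar_cases)
  case (int k)
  then have "a + ereal (real n) = ereal (of_int (k + int n))"
    by simp
  then show ?thesis
    unfolding zstar_def by blast
qed (simp_all add: zstar_def)

lemma zstar_le_le_add_one:
  assumes a: "a \<in> zstar" and b: "b \<in> zstar" and "a \<le> b" "b \<le> a + 1"
  shows "b = a \<or> b = a + 1"
  using a
proof (cases rule: zstar_cases)
  case (int k)
  from b show ?thesis
  proof (cases rule: zstar_cases)
    case (int j)
    with \<open>a = ereal (of_int k)\<close> \<open>a \<le> b\<close> \<open>b \<le> a + 1\<close> have "k \<le> j" "j \<le> k + 1"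
      by (simp_all add: one_ereal_def)
    then have "j = k \<or> j = k + 1"
      by linarith
    then show ?thesis
      using \<open>a = ereal (of_int k)\<close> \<open>b = ereal (of_int j)\<close> by (auto simp: one_ereal_def)
  qed (use int assms in auto)
qed (use assms in auto)

lemma proc_in_zstar:
  assumes "locally_finite P" "\<And>y. \<sigma>0 y \<in> zstar" "is_maximizer \<sigma>0 P x t y"
  shows "proc \<sigma>0 P x t \<in> zstar"
proof -
  obtain n :: nat where "Hpp P y x t = ereal (real n)"
    using Hpp_nat[OF assms(1)] .
  then show ?thesis
    using assms(2,3) zstar_add_nat by (simp add: is_maximizer_def)
qed

lemma maximal_gap_set_compl_eq:
  assumes lf: "locally_finite P"
    and \<sigma>0: "\<And>y. \<sigma>0 y \<in> zstar" and \<zeta>0: "\<And>y. \<zeta>0 y \<in> zstar"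
    and le: "\<And>y. \<sigma>0 y \<le> \<zeta>0 y" "\<And>y. \<zeta>0 y \<le> \<sigma>0 y + 1"
    and max: "\<And>x. \<exists>y. is_maximizer \<sigma>0 P x t y" "\<And>x. \<exists>y. is_maximizer \<zeta>0 P x t y"
  shows "- {x. proc \<zeta>0 P x t = proc \<sigma>0 P x t + 1} =
         {x. \<exists>y. is_maximizer \<zeta>0 P x t y \<and> \<zeta>0 y \<noteq> \<sigma>0 y + 1}"
proof -
  have upper: "proc \<zeta>0 P x t \<le> proc \<sigma>0 P x t + 1" for x
    using proc_le_add_const[of \<zeta>0 \<sigma>0 1] le(2) by (simp add: one_ereal_def)
  have "proc \<zeta>0 P x t \<noteq> proc \<sigma>0 P x t + 1 \<longleftrightarrow>
        (\<exists>y. is_maximizer \<zeta>0 P x t y \<and> \<zeta>0 y \<noteq> \<sigma>0 y + 1)" for x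
  proof
    assume ne: "proc \<zeta>0 P x t \<noteq> proc \<sigma>0 P x t + 1"
    have "proc \<sigma>0 P x t \<le> proc \<zeta>0 P x t"
      using le(1) by (rule proc_mono)
    moreover obtain y where y: "is_maximizer \<sigma>0 P x t y"
      using max(1) by blast
    moreover obtain z where "is_maximizer \<zeta>0 P x t z"
      using max(2) by blast
    ultimately have eq: "proc \<zeta>0 P x t = proc \<sigma>0 P x t"
      using zstar_le_le_add_one proc_in_zstar[OF lf] \<sigma>0 \<zeta>0 upper ne by blast
    have "\<sigma>0 y + Hpp P y x t \<le> \<zeta>0 y + Hpp P y x t"
      using le(1) by (rule add_right_mono)
    moreover have "\<zeta>0 y + Hpp P y x t \<le> proc \<zeta>0 P x t"
      using y by (intro proc_upper) (simp add: is_maximizer_def)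
    ultimately have "is_maximizer \<zeta>0 P x t y"
      using y eq by (auto simp: is_maximizer_def)
    moreover have "\<zeta>0 y \<noteq> \<sigma>0 y + 1"
    proof
      assume "\<zeta>0 y = \<sigma>0 y + 1"
      then have "proc \<sigma>0 P x t + 1 \<le> proc \<zeta>0 P x t"
        using maximizer_gap_imp_proc_gap[OF y] by simp
      then show False
        using upper ne by (metis antisym)
    qed
    ultimately show "\<exists>y. is_maximizer \<zeta>0 P x t y \<and> \<zeta>0 y \<noteq> \<sigma>0 y + 1"
      by blast
  next
    assume "\<exists>y. is_maximizer \<zeta>0 P x t y \<and> \<zeta>0 y \<noteq> \<sigma>0 y + 1"
    then obtain y where y: "is_maximizer \<zeta>0 P x t y" and ne: "\<zeta>0 y \<noteq> \<sigma>0 y + 1"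
      by blast
    show "proc \<zeta>0 P x t \<noteq> proc \<sigma>0 P x t + 1"
    proof
      assume "proc \<zeta>0 P x t = proc \<sigma>0 P x t + 1"
      then have "\<sigma>0 y + 1 \<le> \<zeta>0 y"
        using proc_gap_imp_maximizer_gap[OF lf y] by simp
      then show False
        using le(2)[of y] ne by simp
    qed
  qed
  then show ?thesis
    by blast
qed

theorem lemma9p1:
  fixes M :: "'w measure" and N :: "'w \<Rightarrow> ((real ^ 'd::finite) \<times> real) set"
    and \<sigma>0 \<zeta>0 :: "real ^ 'd \<Rightarrow> ereal"
  assumes d2: "CARD('d) \<ge> 2"
    and pp: "poisson_pp M N"
    and \<sigma>0: "\<sigma>0 \<in> StateSpace" and \<zeta>0: "\<zeta>0 \<in> StateSpace"
    and attained: "AE \<omega> in M. \<forall>x t. t \<ge> 0 \<longrightarrow>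
                      (\<exists>y. is_maximizer \<sigma>0 (N \<omega>) x t y) \<and> (\<exists>y. is_maximizer \<zeta>0 (N \<omega>) x t y)"
  shows
    "(AE \<omega> in M. \<forall>(m::nat) x t. m > 0 \<longrightarrow> t \<ge> 0 \<longrightarrow>
        (proc \<zeta>0 (N \<omega>) x t \<ge> proc \<sigma>0 (N \<omega>) x t + ereal (real m) \<longrightarrow>
           \<not> (\<exists>y. is_maximizer \<zeta>0 (N \<omega>) x t y \<and> \<not> (\<zeta>0 y \<ge> \<sigma>0 y + ereal (real m)))) \<and>
        (\<not> (proc \<zeta>0 (N \<omega>) x t \<ge> proc \<sigma>0 (N \<omega>) x t + ereal (real m)) \<longrightarrow>
           \<not> (\<exists>y. is_maximizer \<sigma>0 (N \<omega>) x t y \<and> \<zeta>0 y \<ge> \<sigma>0 y + ereal (real m))))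
     \<and>
     (\<forall>h::nat. h > 0 \<longrightarrow> (\<forall>y. \<sigma>0 y \<le> \<zeta>0 y \<and> \<zeta>0 y \<le> \<sigma>0 y + ereal (real h)) \<longrightarrow>
        (AE \<omega> in M.
           (\<forall>x t. t \<ge> 0 \<longrightarrow> proc \<sigma>0 (N \<omega>) x t \<le> proc \<zeta>0 (N \<omega>) x t \<and>
                               proc \<zeta>0 (N \<omega>) x t \<le> proc \<sigma>0 (N \<omega>) x t + ereal (real h)) \<and>
           (\<forall>t. t \<ge> 0 \<longrightarrow>
              {x. proc \<zeta>0 (N \<omega>) x t = proc \<sigma>0 (N \<omega>) x t + ereal (real h)}
              = {x. \<exists>y. is_maximizer \<sigma>0 (N \<omega>) x t y \<and> \<zeta>0 y = \<sigma>0 y + ereal (real h)}) \<and>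
           (h = 1 \<longrightarrow> (\<forall>t. t \<ge> 0 \<longrightarrow>
              - {x. proc \<zeta>0 (N \<omega>) x t = proc \<sigma>0 (N \<omega>) x t + ereal (real h)}
              = {x. \<exists>y. is_maximizer \<zeta>0 (N \<omega>) x t y \<and> \<not> (\<zeta>0 y = \<sigma>0 y + ereal (real h))}))))"
proof -
  have \<sigma>0_int: "\<And>y. \<sigma>0 y \<in> zstar" and \<zeta>0_int: "\<And>y. \<zeta>0 y \<in> zstar"
    using \<sigma>0 \<zeta>0 by (auto simp: StateSpace_def)
  have good: "AE \<omega> in M. locally_finite (N \<omega>) \<and> (\<forall>x t. t \<ge> 0 \<longrightarrow>
      (\<exists>y. is_maximizer \<sigma>0 (N \<omega>) x t y) \<and> (\<exists>y. is_maximizer \<zeta>0 (N \<omega>) x t y))"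
    using poisson_pp_AE_locally_finite[OF pp] attained by eventually_elim blast
  show ?thesis
    apply (intro conjI allI impI)
    subgoal
      using good by eventually_elim (meson proc_gap_imp_maximizer_gap maximizer_gap_imp_proc_gap)
    subgoal premises bounds for h
      using good
    proof eventually_elim
      case (elim \<omega>)
      then have lf: "locally_finite (N \<omega>)" and max:
        "\<And>x t. t \<ge> 0 \<Longrightarrow> (\<exists>y. is_maximizer \<sigma>0 (N \<omega>) x t y) \<and> (\<exists>y. is_maximizer \<zeta>0 (N \<omega>) x t y)"
        by auto
      have le: "\<And>y. \<sigma>0 y \<le> \<zeta>0 y" "\<And>y. \<zeta>0 y \<le> \<sigma>0 y + ereal (real h)"
        using bounds(2) by auto
      show ?case
        apply (intro conjI allI impI)
        subgoal using le(1) by (rule proc_mono)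
        subgoal using le(2) by (rule proc_le_add_const)
        subgoal using max by (intro maximal_gap_set_eq[OF lf le(2)]) blast
        subgoal premises h1 for t
          using le(2) max h1(2) unfolding h1(1) of_nat_1 one_ereal_def[symmetric]
          by (intro maximal_gap_set_compl_eq[OF lf \<sigma>0_int \<zeta>0_int le(1)]) blast+
        done
    qed
    done
qed

end
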